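(* Let $x\in M$, let $\mathcal T$ be a family of $f$-induced $(D_0,\delta,\tau)$-local tilings on $W^u(x)$, and consider modified Schmidt games induced by $f$ on $W^u(x)$ with respect to $\mathcal T$. Then: (1) for any integers $a,b>a_*$, every $(a,b)$-winning set is dense in $D_0$; (2) for any integer $a>a_*$, the intersection of countably many $a$-winning sets is $a$-winning.
   Context: $M$ is a smooth compact Riemannian manifold without boundary and $f:M\to M$ a $C^{1+\theta}$ partially hyperbolic diffeomorphism (continuous $Tf$-invariant splitting $TM=E^s\oplus E^c\oplus E^u$ with $E^u$ uniformly expanded and dominating $E^c$, $E^s$ uniformly contracted and dominated by $E^c$). $W^u(x)$ is the unstable manifold through $x$ with induced distance $d^u$ and open balls $B^u(z,r)$. Constants $1<\sigma_1\le\sigma_2$ satisfy $\sigma_1\le\|T_zfv\|\le\sigma_2$ for all unit $v\in E^u_z$. Tilings: $\delta,\tau>0$ small, $D_0\subset W^u(x)$ open connected with $B^u(x_0,\frac{(1-\tau)\delta}{2})\subset D_0\subset B^u(x_0,(1+\tau)\delta)$ for some $x_0\in W^u(x)$. A family $D^i_n$ ($n\ge1$, $1\le i\le k_n$) of subsets of $W^u(x)$ is a family of $f$-induced $(D_0,\delta,\tau)$-local tilings if: (1) each $D^i_n$ is open connected with $B^u(f^n(x^i_n),\frac{(1-\tau)\delta}{2})\subset f^n(D^i_n)\subset B^u(f^n(x^i_n),(1+\tau)\delta)$ for some $x^i_n\in W^u(x)$; (2) $D^i_n\cap D^j_n=\emptyset$ for $i\ne j$; (3) $D_0\subset\bigcup_i\overline{D^i_n}$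 and $D^i_n\cap D_0\neq\emptyset$. With $\mathcal T_0=\{D_0\}$, elements of $\mathcal T_n$ are $n$-atoms, $\mathbf T_n$ their union, $\Omega=\{(z,n):z\in\mathbf T_n\}$, $\psi(z,n)$ the $n$-atom containing $z$, $(z,n)\le(z',n')$ iff $\psi(z,n)\subset\psi(z',n')$. Games: fix a positive integer $a_*$ with $(1+\tau)\delta\sigma_1^{-a_*}<(1-\tau)\delta/4$ (then each atom $\psi(z,n)$ contains an $(n+m)$-atom for all $m>a_*$). For $a,b>a_*$ and target $S\subset W^u(x)$: Bob chooses $\omega_1=(z_1,n_1)\in\Omega$; Alice chooses $\omega'_1\le\omega_1$ at level $n_1+a$; in turn $k$ Bob chooses $\omega_k\le\omega'_{k-1}$ at level $n'_{k-1}+b$, Alice chooses $\omega'_k\le\omega_k$ at level $n_k+a$. The nested atoms shrink to a unique point $z_\infty$; Alice wins iff $z_\infty\in S$. $S$ is $(a,b)$-winning if Alice has a strategy that always wins; $a$-winning if $(a,b)$-winning for every $b>a_*$. *)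

theory Defs
  imports "HOL-Analysis.Analysis"
begin

text \<open>The type 'a plays the role of the manifold M, Wu y is the unstable leaf through y,
  du is the induced leaf distance d^u, and f is the diffeomorphism.  Only those
  properties of the smooth setting that concern the leaves are recorded.\<close>

definition unstable_leaf_system ::
  "('a \<Rightarrow> 'a) \<Rightarrow> ('a \<Rightarrow> 'a set) \<Rightarrow> ('a \<Rightarrow> 'a \<Rightarrow> real) \<Rightarrow> real \<Rightarrow> real \<Rightarrow> bool" where
  "unstable_leaf_system f Wu du \<sigma>1 \<sigma>2 \<longleftrightarrow>
     bij f \<and> 1 < \<sigma>1 \<and> \<sigma>1 \<le> \<sigma>2 \<and>
     (\<forall>y. y \<in> Wu y) \<and>
     (\<forall>y z. z \<in> Wu y \<longrightarrow> Wu z = Wu y) \<and>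
     (\<forall>y. f ` Wu y = Wu (f y)) \<and>
     (\<forall>y. Metric_space (Wu y) du) \<and>
     (\<forall>y. Metric_space.mcomplete (Wu y) du) \<and>
     (\<forall>y z. z \<in> Wu y \<longrightarrow> \<sigma>1 * du y z \<le> du (f y) (f z) \<and> du (f y) (f z) \<le> \<sigma>2 * du y z)"

definition leaftop :: "('a \<Rightarrow> 'a set) \<Rightarrow> ('a \<Rightarrow> 'a \<Rightarrow> real) \<Rightarrow> 'a \<Rightarrow> 'a topology" where
  "leaftop Wu du x = Metric_space.mtopology (Wu x) du"

definition uball :: "('a \<Rightarrow> 'a set) \<Rightarrow> ('a \<Rightarrow> 'a \<Rightarrow> real) \<Rightarrow> 'a \<Rightarrow> real \<Rightarrow> 'a set" where
  "uball Wu du z r = Metric_space.mball (Wu z) du z r"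

definition local_tilings ::
  "('a \<Rightarrow> 'a) \<Rightarrow> ('a \<Rightarrow> 'a set) \<Rightarrow> ('a \<Rightarrow> 'a \<Rightarrow> real) \<Rightarrow> 'a \<Rightarrow> 'a set \<Rightarrow> real \<Rightarrow> real
    \<Rightarrow> (nat \<Rightarrow> nat) \<Rightarrow> (nat \<Rightarrow> nat \<Rightarrow> 'a set) \<Rightarrow> bool" where
  "local_tilings f Wu du x D0 \<delta> \<tau> k D \<longleftrightarrow>
     0 < \<delta> \<and> 0 < \<tau> \<and>
     openin (leaftop Wu du x) D0 \<and> connectedin (leaftop Wu du x) D0 \<and>
     (\<exists>x0 \<in> Wu x. uball Wu du x0 ((1 - \<tau>) * \<delta> / 2) \<subseteq> D0 \<and> D0 \<subseteq> uball Wu du x0 ((1 + \<tau>) * \<delta>)) \<and>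
     (\<forall>n \<ge> 1.
        (\<forall>i \<in> {1..k n}.
            openin (leaftop Wu du x) (D n i) \<and> connectedin (leaftop Wu du x) (D n i) \<and>
            (\<exists>xi \<in> Wu x. uball Wu du ((f ^^ n) xi) ((1 - \<tau>) * \<delta> / 2) \<subseteq> (f ^^ n) ` D n i \<and>
                          (f ^^ n) ` D n i \<subseteq> uball Wu du ((f ^^ n) xi) ((1 + \<tau>) * \<delta>)) \<and>
            D n i \<inter> D0 \<noteq> {}) \<and>
        (\<forall>i \<in> {1..k n}. \<forall>j \<in> {1..k n}. i \<noteq> j \<longrightarrow> D n i \<inter> D n j = {}) \<and>
        D0 \<subseteq> (\<Union>i \<in> {1..k n}. leaftop Wu du x closure_of (D n i)))"

definition tiles :: "'a set \<Rightarrow> (nat \<Rightarrow> nat) \<Rightarrow> (nat \<Rightarrow> nat \<Rightarrow> 'a set) \<Rightarrow> nat \<Rightarrow> 'a set set" where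
  "tiles D0 k D n = (if n = 0 then {D0} else D n ` {1..k n})"

definition atom :: "'a set \<Rightarrow> (nat \<Rightarrow> nat) \<Rightarrow> (nat \<Rightarrow> nat \<Rightarrow> 'a set) \<Rightarrow> 'a \<times> nat \<Rightarrow> 'a set" where
  "atom D0 k D \<omega> = (THE A. A \<in> tiles D0 k D (snd \<omega>) \<and> fst \<omega> \<in> A)"

definition Omega :: "'a set \<Rightarrow> (nat \<Rightarrow> nat) \<Rightarrow> (nat \<Rightarrow> nat \<Rightarrow> 'a set) \<Rightarrow> ('a \<times> nat) set" where
  "Omega D0 k D = {(z, n). z \<in> \<Union>(tiles D0 k D n)}"

definition pos_le :: "'a set \<Rightarrow> (nat \<Rightarrow> nat) \<Rightarrow> (nat \<Rightarrow> nat \<Rightarrow> 'a set) \<Rightarrow> 'a \<times> nat \<Rightarrow> 'a \<times> nat \<Rightarrow> bool" where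
  "pos_le D0 k D \<omega> \<omega>' \<longleftrightarrow> atom D0 k D \<omega> \<subseteq> atom D0 k D \<omega>'"

definition outcome ::
  "('a \<Rightarrow> 'a set) \<Rightarrow> ('a \<Rightarrow> 'a \<Rightarrow> real) \<Rightarrow> 'a \<Rightarrow> 'a set \<Rightarrow> (nat \<Rightarrow> nat) \<Rightarrow> (nat \<Rightarrow> nat \<Rightarrow> 'a set)
    \<Rightarrow> (nat \<Rightarrow> 'a \<times> nat) \<Rightarrow> 'a" where
  "outcome Wu du x D0 k D alice =
     (THE z. z \<in> Wu x \<and> (\<forall>j. z \<in> leaftop Wu du x closure_of atom D0 k D (alice j)))"

text \<open>Bob's moves are bob 0, bob 1, ...; Alice's strategy sigma maps the list
  of Bob's moves so far to her answer.\<close>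
definition ab_winning ::
  "('a \<Rightarrow> 'a set) \<Rightarrow> ('a \<Rightarrow> 'a \<Rightarrow> real) \<Rightarrow> 'a \<Rightarrow> 'a set \<Rightarrow> (nat \<Rightarrow> nat) \<Rightarrow> (nat \<Rightarrow> nat \<Rightarrow> 'a set)
    \<Rightarrow> nat \<Rightarrow> nat \<Rightarrow> 'a set \<Rightarrow> bool" where
  "ab_winning Wu du x D0 k D a b S \<longleftrightarrow>
     (\<exists>\<sigma> :: ('a \<times> nat) list \<Rightarrow> 'a \<times> nat. \<forall>bob :: nat \<Rightarrow> 'a \<times> nat.
        let alice = (\<lambda>j. \<sigma> (map bob [0..<Suc j]));
            bob_ok = (\<lambda>j. bob j \<in> Omega D0 k D \<and>
                         (0 < j \<longrightarrow> snd (bob j) = snd (alice (j - 1)) + b \<and>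
                                    pos_le D0 k D (bob j) (alice (j - 1))));
            alice_ok = (\<lambda>j. alice j \<in> Omega D0 k D \<and> snd (alice j) = snd (bob j) + a \<and>
                           pos_le D0 k D (alice j) (bob j))
        in (\<forall>j. (\<forall>i \<le> j. bob_ok i) \<and> (\<forall>i < j. alice_ok i) \<longrightarrow> alice_ok j) \<and>
           ((\<forall>j. bob_ok j \<and> alice_ok j) \<longrightarrow> outcome Wu du x D0 k D alice \<in> S))"

definition a_winning ::
  "('a \<Rightarrow> 'a set) \<Rightarrow> ('a \<Rightarrow> 'a \<Rightarrow> real) \<Rightarrow> 'a \<Rightarrow> 'a set \<Rightarrow> (nat \<Rightarrow> nat) \<Rightarrow> (nat \<Rightarrow> nat \<Rightarrow> 'a set)
    \<Rightarrow> nat \<Rightarrow> nat \<Rightarrow> 'a set \<Rightarrow> bool" where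
  "a_winning Wu du x D0 k D a_star a S \<longleftrightarrow> (\<forall>b > a_star. ab_winning Wu du x D0 k D a b S)"

end

theory Submission
  imports Defs
begin

text \<open>Part (1): to reach a point y of D0 within distance r, Bob opens with an atom whose closure
  lies in B(y, r) \<inter> D0 (closures of n-atoms have d^u-diameter at most 2(1+\<tau>)\<delta>\<sigma>1^-n) and
  afterwards answers every move of Alice by some atom b levels further down, which exists because
  expansion by \<sigma>1^b with b > a_star beats the size of a tile.  The outcome of the play lies in S
  by Alice's winning strategy and in the closure of Bob's first atom by completeness of the leaf.

  Part (2): Alice plays the games for all S i at once, round m of the i-th game being round
  2^i (2m+1) - 1 of the actual game.  Seen from the i-th game, Bob's moves then descend
  (2^(i+1) - 1)(a+b) + b levels, so Alice uses her strategy for S i with that parameter; all these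
  subplays are cofinal in the actual play and hence share its outcome.\<close>

section \<open>Plays and strategies\<close>

definition bob_ok :: "'a set \<Rightarrow> (nat \<Rightarrow> nat) \<Rightarrow> (nat \<Rightarrow> nat \<Rightarrow> 'a set) \<Rightarrow> nat
    \<Rightarrow> (nat \<Rightarrow> 'a \<times> nat) \<Rightarrow> (nat \<Rightarrow> 'a \<times> nat) \<Rightarrow> nat \<Rightarrow> bool" where
  "bob_ok D0 k D b bob alice j \<longleftrightarrow> bob j \<in> Omega D0 k D \<and>
     (0 < j \<longrightarrow> snd (bob j) = snd (alice (j - 1)) + b \<and> pos_le D0 k D (bob j) (alice (j - 1)))"

definition alice_ok :: "'a set \<Rightarrow> (nat \<Rightarrow> nat) \<Rightarrow> (nat \<Rightarrow> nat \<Rightarrow> 'a set) \<Rightarrow> nat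
    \<Rightarrow> (nat \<Rightarrow> 'a \<times> nat) \<Rightarrow> (nat \<Rightarrow> 'a \<times> nat) \<Rightarrow> nat \<Rightarrow> bool" where
  "alice_ok D0 k D a bob alice j \<longleftrightarrow> alice j \<in> Omega D0 k D \<and>
     snd (alice j) = snd (bob j) + a \<and> pos_le D0 k D (alice j) (bob j)"

definition play :: "(('a \<times> nat) list \<Rightarrow> 'a \<times> nat) \<Rightarrow> (nat \<Rightarrow> 'a \<times> nat) \<Rightarrow> nat \<Rightarrow> 'a \<times> nat" where
  "play \<sigma> bob j = \<sigma> (map bob [0..<Suc j])"

definition winning_strategy :: "('a \<Rightarrow> 'a set) \<Rightarrow> ('a \<Rightarrow> 'a \<Rightarrow> real) \<Rightarrow> 'a \<Rightarrow> 'a set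
    \<Rightarrow> (nat \<Rightarrow> nat) \<Rightarrow> (nat \<Rightarrow> nat \<Rightarrow> 'a set) \<Rightarrow> nat \<Rightarrow> nat \<Rightarrow> 'a set
    \<Rightarrow> (('a \<times> nat) list \<Rightarrow> 'a \<times> nat) \<Rightarrow> bool" where
  "winning_strategy Wu du x D0 k D a b S \<sigma> \<longleftrightarrow> (\<forall>bob.
     (\<forall>j. (\<forall>i\<le>j. bob_ok D0 k D b bob (play \<sigma> bob) i) \<and> (\<forall>i<j. alice_ok D0 k D a bob (play \<sigma> bob) i)
          \<longrightarrow> alice_ok D0 k D a bob (play \<sigma> bob) j) \<and>
     ((\<forall>j. bob_ok D0 k D b bob (play \<sigma> bob) j \<and> alice_ok D0 k D a bob (play \<sigma> bob) j)
          \<longrightarrow> outcome Wu du x D0 k D (play \<sigma> bob) \<in> S))"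

lemma ab_winning_iff_winning_strategy:
  "ab_winning Wu du x D0 k D a b S \<longleftrightarrow> (\<exists>\<sigma>. winning_strategy Wu du x D0 k D a b S \<sigma>)"
  unfolding winning_strategy_def ab_winning_def bob_ok_def alice_ok_def play_def Let_def
  by simp

lemma pos_le_refl: "pos_le D0 k D \<omega> \<omega>"
  unfolding pos_le_def by blast

lemma pos_le_trans: "pos_le D0 k D u v \<Longrightarrow> pos_le D0 k D v w \<Longrightarrow> pos_le D0 k D u w"
  unfolding pos_le_def by blast

lemma legal_play_bob_move:
  assumes "\<forall>t\<le>j + Suc d. bob_ok D0 k D b bob alice t"
    and "\<forall>t<j + Suc d. j \<le> t \<longrightarrow> alice_ok D0 k D a bob alice t"
  shows "snd (bob (j + Suc d)) = snd (alice j) + d * (a + b) + b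
    \<and> pos_le D0 k D (bob (j + Suc d)) (alice j)"
  using assms
proof (induction d)
  case 0
  then show ?case by (auto simp: bob_ok_def)
next
  case (Suc d)
  then have IH: "snd (bob (j + Suc d)) = snd (alice j) + d * (a + b) + b"
    "pos_le D0 k D (bob (j + Suc d)) (alice j)" by auto
  have "bob_ok D0 k D b bob alice (j + Suc (Suc d))" "alice_ok D0 k D a bob alice (j + Suc d)"
    using Suc.prems by auto
  then have "snd (bob (j + Suc (Suc d))) = snd (bob (j + Suc d)) + a + b"
    "pos_le D0 k D (bob (j + Suc (Suc d))) (bob (j + Suc d))"
    by (auto simp: bob_ok_def alice_ok_def dest: pos_le_trans)
  with IH show ?case by (auto dest: pos_le_trans)
qed

lemma legal_play_nested:
  assumes "\<forall>j. bob_ok D0 k D b bob alice j \<and> alice_ok D0 k D a bob alice j" and "j \<le> j'"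
  shows "pos_le D0 k D (alice j') (alice j)"
  using assms(2)
proof (induction j' rule: dec_induct)
  case base
  then show ?case by (rule pos_le_refl)
next
  case (step n)
  have "pos_le D0 k D (alice (Suc n)) (bob (Suc n))" "pos_le D0 k D (bob (Suc n)) (alice n)"
    using assms(1)[rule_format, of "Suc n"] by (simp_all add: alice_ok_def bob_ok_def)
  with step.IH show ?case by (blast dest: pos_le_trans)
qed

lemma legal_play_level_ge:
  assumes "0 < b" and "\<forall>j. bob_ok D0 k D b bob alice j \<and> alice_ok D0 k D a bob alice j"
  shows "j \<le> snd (alice j)"
proof (induction j)
  case (Suc j)
  with assms(1) show ?case
    using assms(2)[rule_format, of "Suc j"] by (simp add: alice_ok_def bob_ok_def)
qed simp

lemma outcome_cofinal_subsequence:
  assumes "\<And>j j'. j \<le> j' \<Longrightarrow> pos_le D0 k D (alice j') (alice j)" and "\<And>j. j \<le> h j"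
  shows "outcome Wu du x D0 k D (alice \<circ> h) = outcome Wu du x D0 k D alice"
proof -
  have "z \<in> leaftop Wu du x closure_of atom D0 k D (alice j)"
    if "\<forall>j. z \<in> leaftop Wu du x closure_of atom D0 k D (alice (h j))" for z j
  proof -
    have "atom D0 k D (alice (h j)) \<subseteq> atom D0 k D (alice j)"
      using assms unfolding pos_le_def by blast
    then show ?thesis using that closure_of_mono by blast
  qed
  then have "(\<forall>j. z \<in> leaftop Wu du x closure_of atom D0 k D (alice (h j))) \<longleftrightarrow>
      (\<forall>j. z \<in> leaftop Wu du x closure_of atom D0 k D (alice j))" for z
    by blast
  then show ?thesis
    unfolding outcome_def comp_def by simp
qed

lemma responding_bob_exists:
  "\<exists>bob. bob 0 = \<omega>0 \<and> (\<forall>j. bob (Suc j) = resp (play \<sigma> bob j))"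
proof -
  define hist where "hist = rec_nat [\<omega>0] (\<lambda>_ l. l @ [resp (\<sigma> l)])"
  define bob where "bob j = hist j ! j" for j
  have hist_0: "hist 0 = [\<omega>0]" and hist_Suc: "hist (Suc j) = hist j @ [resp (\<sigma> (hist j))]" for j
    unfolding hist_def by simp_all
  have length_hist: "length (hist j) = Suc j" for j
    by (induction j) (simp_all add: hist_0 hist_Suc)
  have "hist j ! i = bob i" if "i \<le> j" for i j
    using that
  proof (induction j)
    case (Suc j)
    then show ?case
      by (cases "i = Suc j") (simp_all add: bob_def hist_Suc nth_append length_hist)
  qed (simp add: bob_def)
  then have "map bob [0..<Suc j] = hist j" for j
    by (intro nth_equalityI) (simp_all add: length_hist del: upt_Suc)
  then have "bob (Suc j) = resp (play \<sigma> bob j)" for j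
    unfolding play_def bob_def by (simp add: hist_Suc nth_append length_hist del: upt_Suc)
  moreover have "bob 0 = \<omega>0"
    by (simp add: bob_def hist_0)
  ultimately show ?thesis by blast
qed

lemma legal_play_against_refining_bob:
  assumes alice_legal: "\<And>j. \<forall>i\<le>j. bob_ok D0 k D b bob alice i \<Longrightarrow> \<forall>i<j. alice_ok D0 k D a bob alice i
      \<Longrightarrow> alice_ok D0 k D a bob alice j"
    and refine: "\<And>\<omega>. \<omega> \<in> Omega D0 k D \<Longrightarrow> atom D0 k D \<omega> \<subseteq> D0 \<Longrightarrow>
      refine \<omega> \<in> Omega D0 k D \<and> snd (refine \<omega>) = snd \<omega> + b \<and> pos_le D0 k D (refine \<omega>) \<omega>"
    and start: "bob 0 \<in> Omega D0 k D" "atom D0 k D (bob 0) \<subseteq> D0"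
    and respond: "\<And>j. bob (Suc j) = refine (alice j)"
  shows "bob_ok D0 k D b bob alice j \<and> alice_ok D0 k D a bob alice j"
proof -
  have "(\<forall>i\<le>j. bob_ok D0 k D b bob alice i \<and> alice_ok D0 k D a bob alice i)
      \<and> atom D0 k D (bob j) \<subseteq> D0" for j
  proof (induction j)
    case 0
    have "bob_ok D0 k D b bob alice 0"
      using start by (simp add: bob_ok_def)
    with alice_legal[of 0] start show ?case by simp
  next
    case (Suc j)
    then have "alice j \<in> Omega D0 k D" "atom D0 k D (alice j) \<subseteq> D0"
      unfolding alice_ok_def pos_le_def by auto
    then have "bob_ok D0 k D b bob alice (Suc j)" "atom D0 k D (bob (Suc j)) \<subseteq> D0"
      using refine[of "alice j"] respond[of j] unfolding bob_ok_def pos_le_def by auto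
    with Suc.IH have "\<forall>i\<le>Suc j. bob_ok D0 k D b bob alice i" "\<forall>i<Suc j. alice_ok D0 k D a bob alice i"
      by (auto simp: le_Suc_eq less_Suc_eq_le)
    with alice_legal[of "Suc j"] \<open>atom D0 k D (bob (Suc j)) \<subseteq> D0\<close> show ?case
      by (auto simp: le_Suc_eq)
  qed
  then show ?thesis by blast
qed

section \<open>Playing countably many games at once\<close>

definition slot :: "nat \<Rightarrow> nat \<Rightarrow> nat" where
  "slot i m = 2 ^ i * (2 * m + 1) - 1"

lemma slot_Suc: "slot i (Suc m) = slot i m + 2 ^ Suc i"
proof -
  have "(1::nat) \<le> 2 ^ i" by simp
  then show ?thesis unfolding slot_def by (simp add: algebra_simps)
qed

lemma strict_mono_slot: "strict_mono (slot i)"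
  by (rule strict_mono_Suc_iff[THEN iffD2]) (simp add: slot_Suc)

lemma slot_le_iff: "slot i m' \<le> slot i m \<longleftrightarrow> m' \<le> m"
  using strict_mono_slot by (rule strict_mono_less_eq)

lemma slot_less_iff: "slot i m' < slot i m \<longleftrightarrow> m' < m"
  using strict_mono_slot by (rule strict_mono_less)

lemma le_slot: "m \<le> slot i m"
  using strict_mono_slot by (rule strict_mono_imp_increasing)

lemma slot_surj: "\<exists>i m. slot i m = j"
proof -
  have "\<exists>i m. 2 ^ i * (2 * m + 1) = n" if "0 < n" for n :: nat
    using that
  proof (induction n rule: less_induct)
    case (less n)
    show ?case
    proof (cases "even n")
      case True
      then obtain n' where n': "n = 2 * n'" by blast
      with less.prems obtain i m where "2 ^ i * (2 * m + 1) = n'"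
        using less.IH[of n'] by auto
      then have "2 ^ Suc i * (2 * m + 1) = n" using n' by simp
      then show ?thesis by blast
    next
      case False
      then obtain m where "n = 2 * m + 1" by (blast elim: oddE)
      then have "2 ^ 0 * (2 * m + 1) = n" by simp
      then show ?thesis by blast
    qed
  qed
  then obtain i m where "2 ^ i * (2 * m + 1) = Suc j" by blast
  then have "slot i m = j" unfolding slot_def by simp
  then show ?thesis by blast
qed

lemma slot_inj:
  assumes "slot i m = slot i' m'"
  shows "i = i' \<and> m = m'"
proof -
  have "(1::nat) \<le> 2 ^ i * (2 * m + 1)" "(1::nat) \<le> 2 ^ i' * (2 * m' + 1)"
    by (simp_all add: Suc_leI)
  with assms have "2 ^ i * (2 * m + 1) = 2 ^ i' * (2 * m' + 1)"
    unfolding slot_def by linarith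
  then show ?thesis
  proof (induction i arbitrary: i')
    case 0
    then have "odd (2 ^ i' * (2 * m' + 1))" by (simp only: 0[symmetric]) simp
    then have "i' = 0" by (cases i') auto
    with 0 show ?case by simp
  next
    case (Suc i)
    then have "even (2 ^ i' * (2 * m' + 1))" by (simp only: Suc.prems[symmetric]) simp
    then obtain i0 where i0: "i' = Suc i0" by (cases i') auto
    with Suc.prems have "2 ^ i * (2 * m + 1) = 2 ^ i0 * (2 * m' + 1)" by simp
    with Suc.IH i0 show ?case by auto
  qed
qed

definition slot_index :: "nat \<Rightarrow> nat \<times> nat" where
  "slot_index = inv (\<lambda>(i, m). slot i m)"

lemma slot_index_slot: "slot_index (slot i m) = (i, m)"
proof -
  have "inj (\<lambda>(i, m). slot i m)"
    by (auto intro!: injI dest: slot_inj)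
  then show ?thesis
    unfolding slot_index_def using inv_f_f[of "\<lambda>(i, m). slot i m" "(i, m)"] by simp
qed

definition interleave :: "(nat \<Rightarrow> ('a \<times> nat) list \<Rightarrow> 'a \<times> nat) \<Rightarrow> ('a \<times> nat) list \<Rightarrow> 'a \<times> nat" where
  "interleave \<sigma>s l = (case slot_index (length l - 1) of
     (i, m) \<Rightarrow> \<sigma>s i (map (\<lambda>m'. l ! slot i m') [0..<Suc m]))"

lemma play_interleave: "play (interleave \<sigma>s) bob (slot i m) = play (\<sigma>s i) (bob \<circ> slot i) m"
proof -
  have "map (\<lambda>m'. map bob [0..<Suc (slot i m)] ! slot i m') [0..<Suc m] = map (bob \<circ> slot i) [0..<Suc m]"
  proof (rule map_cong[OF refl])
    fix m' assume "m' \<in> set [0..<Suc m]"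
    then have "m' \<le> m" by auto
    then have "slot i m' < Suc (slot i m)"
      by (simp add: strict_mono_less_eq[OF strict_mono_slot] less_Suc_eq_le)
    then show "map bob [0..<Suc (slot i m)] ! slot i m' = (bob \<circ> slot i) m'"
      by (simp del: upt_Suc)
  qed
  moreover have "length (map bob [0..<Suc (slot i m)]) - 1 = slot i m" by simp
  ultimately show ?thesis
    unfolding play_def interleave_def by (simp only: slot_index_slot prod.case)
qed

lemma bob_ok_subgame:
  assumes "\<forall>t\<le>slot i m. bob_ok D0 k D b bob alice t" and "\<forall>t<slot i m. alice_ok D0 k D a bob alice t"
  shows "bob_ok D0 k D ((2 ^ Suc i - 1) * (a + b) + b) (bob \<circ> slot i) (alice \<circ> slot i) m"
proof (cases m)
  case 0
  then show ?thesis using assms(1) by (auto simp: bob_ok_def)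
next
  case (Suc m0)
  define d :: nat where "d = 2 ^ Suc i - 1"
  have eq: "slot i m = slot i m0 + Suc d"
    unfolding Suc d_def slot_Suc by simp
  have "snd (bob (slot i m0 + Suc d)) = snd (alice (slot i m0)) + d * (a + b) + b
      \<and> pos_le D0 k D (bob (slot i m0 + Suc d)) (alice (slot i m0))"
    by (rule legal_play_bob_move) (use assms eq in auto)
  with assms(1) Suc eq show ?thesis by (auto simp: bob_ok_def d_def)
qed

lemma alice_ok_subgame:
  "alice_ok D0 k D a (bob \<circ> slot i) (alice \<circ> slot i) m \<longleftrightarrow> alice_ok D0 k D a bob alice (slot i m)"
  by (simp add: alice_ok_def)

lemma alice_ok_from_subgames:
  assumes sub_legal: "\<And>i m. \<forall>m'\<le>m. bob_ok D0 k D ((2 ^ Suc i - 1) * (a + b) + b) (bob \<circ> slot i) (alice \<circ> slot i) m'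
      \<Longrightarrow> \<forall>m'<m. alice_ok D0 k D a (bob \<circ> slot i) (alice \<circ> slot i) m'
      \<Longrightarrow> alice_ok D0 k D a (bob \<circ> slot i) (alice \<circ> slot i) m"
    and bob_legal: "\<forall>t\<le>j. bob_ok D0 k D b bob alice t"
    and alice_legal: "\<forall>t<j. alice_ok D0 k D a bob alice t"
  shows "alice_ok D0 k D a bob alice j"
proof -
  obtain i m where j: "slot i m = j" using slot_surj by blast
  have "bob_ok D0 k D ((2 ^ Suc i - 1) * (a + b) + b) (bob \<circ> slot i) (alice \<circ> slot i) m'"
    if "m' \<le> m" for m'
  proof (rule bob_ok_subgame)
    have "slot i m' \<le> j"
      using that j slot_le_iff by blast
    then show "\<forall>t\<le>slot i m'. bob_ok D0 k D b bob alice t" "\<forall>t<slot i m'. alice_ok D0 k D a bob alice t"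
      using bob_legal alice_legal by auto
  qed
  moreover have "alice_ok D0 k D a (bob \<circ> slot i) (alice \<circ> slot i) m'" if "m' < m" for m'
  proof -
    have "slot i m' < j"
      using that j slot_less_iff by blast
    with alice_legal show ?thesis
      unfolding alice_ok_subgame by blast
  qed
  ultimately have "alice_ok D0 k D a (bob \<circ> slot i) (alice \<circ> slot i) m"
    by (intro sub_legal) auto
  then show ?thesis
    unfolding alice_ok_subgame j .
qed

lemma winning_strategy_interleave:
  assumes win: "\<And>i. winning_strategy Wu du x D0 k D a ((2 ^ Suc i - 1) * (a + b) + b) (S i) (\<sigma>s i)"
  shows "winning_strategy Wu du x D0 k D a b (\<Inter>i. S i) (interleave \<sigma>s)"
  unfolding winning_strategy_def
proof (intro allI conjI impI)
  fix bob
  define alice where "alice = play (interleave \<sigma>s) bob"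
  have sub: "play (\<sigma>s i) (bob \<circ> slot i) = alice \<circ> slot i" for i
    by (simp add: fun_eq_iff play_interleave alice_def)
  have win_legal: "alice_ok D0 k D a (bob \<circ> slot i) (alice \<circ> slot i) m"
    if "\<forall>m'\<le>m. bob_ok D0 k D ((2 ^ Suc i - 1) * (a + b) + b) (bob \<circ> slot i) (alice \<circ> slot i) m'"
      and "\<forall>m'<m. alice_ok D0 k D a (bob \<circ> slot i) (alice \<circ> slot i) m'" for i m
    using win[of i, unfolded winning_strategy_def, THEN spec[of _ "bob \<circ> slot i"], unfolded sub] that
    by blast
  have win_outcome: "outcome Wu du x D0 k D (alice \<circ> slot i) \<in> S i"
    if "\<forall>m. bob_ok D0 k D ((2 ^ Suc i - 1) * (a + b) + b) (bob \<circ> slot i) (alice \<circ> slot i) m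
      \<and> alice_ok D0 k D a (bob \<circ> slot i) (alice \<circ> slot i) m" for i
    using win[of i, unfolded winning_strategy_def, THEN spec[of _ "bob \<circ> slot i"], unfolded sub] that
    by blast
  show "alice_ok D0 k D a bob (play (interleave \<sigma>s) bob) j"
    if "(\<forall>t\<le>j. bob_ok D0 k D b bob (play (interleave \<sigma>s) bob) t)
      \<and> (\<forall>t<j. alice_ok D0 k D a bob (play (interleave \<sigma>s) bob) t)" for j
    using alice_ok_from_subgames[OF win_legal] that unfolding alice_def by blast
  assume all: "\<forall>j. bob_ok D0 k D b bob (play (interleave \<sigma>s) bob) j
    \<and> alice_ok D0 k D a bob (play (interleave \<sigma>s) bob) j"
  show "outcome Wu du x D0 k D (play (interleave \<sigma>s) bob) \<in> (\<Inter>i. S i)"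
  proof
    fix i
    have "bob_ok D0 k D ((2 ^ Suc i - 1) * (a + b) + b) (bob \<circ> slot i) (alice \<circ> slot i) m"
      "alice_ok D0 k D a (bob \<circ> slot i) (alice \<circ> slot i) m" for m
      using all unfolding alice_ok_subgame alice_def by (blast intro: bob_ok_subgame)+
    then have "outcome Wu du x D0 k D (alice \<circ> slot i) \<in> S i"
      by (intro win_outcome) auto
    moreover have "outcome Wu du x D0 k D (alice \<circ> slot i) = outcome Wu du x D0 k D alice"
      by (rule outcome_cofinal_subsequence[OF legal_play_nested le_slot])
        (use all alice_def in auto)
    ultimately show "outcome Wu du x D0 k D (play (interleave \<sigma>s) bob) \<in> S i"
      unfolding alice_def by simp
  qed
qed

lemma a_winning_Inter:
  fixes S :: "nat \<Rightarrow> 'a set"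
  assumes "\<And>i. a_winning Wu du x D0 k D a_star a (S i)"
  shows "a_winning Wu du x D0 k D a_star a (\<Inter>i. S i)"
  unfolding a_winning_def
proof (intro allI impI)
  fix b assume "a_star < b"
  then have "\<exists>\<sigma>. winning_strategy Wu du x D0 k D a ((2 ^ Suc i - 1) * (a + b) + b) (S i) \<sigma>" for i
    using assms unfolding a_winning_def ab_winning_iff_winning_strategy by auto
  then obtain \<sigma>s where "\<And>i. winning_strategy Wu du x D0 k D a ((2 ^ Suc i - 1) * (a + b) + b) (S i) (\<sigma>s i)"
    by metis
  then show "ab_winning Wu du x D0 k D a b (\<Inter>i. S i)"
    unfolding ab_winning_iff_winning_strategy by (blast intro: winning_strategy_interleave)
qed

section \<open>Atoms of the local tilings\<close>

locale tiled_leaf =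
  fixes f :: "'a \<Rightarrow> 'a" and Wu :: "'a \<Rightarrow> 'a set" and du :: "'a \<Rightarrow> 'a \<Rightarrow> real"
    and \<sigma>1 \<sigma>2 \<delta> \<tau> :: real and x :: 'a and D0 :: "'a set"
    and k :: "nat \<Rightarrow> nat" and D :: "nat \<Rightarrow> nat \<Rightarrow> 'a set" and a_star :: nat
  assumes leaf_system: "unstable_leaf_system f Wu du \<sigma>1 \<sigma>2"
    and tilings: "local_tilings f Wu du x D0 \<delta> \<tau> k D"
    and a_star_large: "(1 + \<tau>) * \<delta> * \<sigma>1 powr (- real a_star) < (1 - \<tau>) * \<delta> / 4"
begin

lemma bij_f: "bij f"
  and one_less_\<sigma>1: "1 < \<sigma>1" and \<sigma>1_le_\<sigma>2: "\<sigma>1 \<le> \<sigma>2"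
  and mem_leaf_self: "\<And>y. y \<in> Wu y"
  and leaf_eq: "\<And>y z. z \<in> Wu y \<Longrightarrow> Wu z = Wu y"
  and image_leaf: "\<And>y. f ` Wu y = Wu (f y)"
  and leaf_metric: "\<And>y. Metric_space (Wu y) du"
  and leaf_complete: "\<And>y. Metric_space.mcomplete (Wu y) du"
  and leaf_expansion: "\<And>y z. z \<in> Wu y \<Longrightarrow> \<sigma>1 * du y z \<le> du (f y) (f z) \<and> du (f y) (f z) \<le> \<sigma>2 * du y z"
  using leaf_system unfolding unstable_leaf_system_def by auto

lemma \<delta>_pos: "0 < \<delta>" and \<tau>_pos: "0 < \<tau>"
  using tilings unfolding local_tilings_def by auto

lemma \<tau>_less_1: "\<tau> < 1"
proof -
  have "0 < (1 + \<tau>) * \<delta> * \<sigma>1 powr (- real a_star)"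
    using \<delta>_pos \<tau>_pos one_less_\<sigma>1 by simp
  then have "0 < (1 - \<tau>) * \<delta>" using a_star_large by simp
  then show ?thesis using \<delta>_pos by (simp add: zero_less_mult_iff)
qed

sublocale W: Metric_space "Wu x" du by (rule leaf_metric)

lemma tiling_facts:
  "openin W.mtopology D0"
  "\<exists>x0 \<in> Wu x. uball Wu du x0 ((1 - \<tau>) * \<delta> / 2) \<subseteq> D0 \<and> D0 \<subseteq> uball Wu du x0 ((1 + \<tau>) * \<delta>)"
  "\<And>n i. n \<ge> 1 \<Longrightarrow> i \<in> {1..k n} \<Longrightarrow> openin W.mtopology (D n i) \<and>
     (\<exists>xi \<in> Wu x. uball Wu du ((f ^^ n) xi) ((1 - \<tau>) * \<delta> / 2) \<subseteq> (f ^^ n) ` D n i \<and>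
        (f ^^ n) ` D n i \<subseteq> uball Wu du ((f ^^ n) xi) ((1 + \<tau>) * \<delta>))"
  "\<And>n i j. n \<ge> 1 \<Longrightarrow> i \<in> {1..k n} \<Longrightarrow> j \<in> {1..k n} \<Longrightarrow> i \<noteq> j \<Longrightarrow> D n i \<inter> D n j = {}"
  "\<And>n. n \<ge> 1 \<Longrightarrow> D0 \<subseteq> (\<Union>i \<in> {1..k n}. W.mtopology closure_of (D n i))"
  using tilings unfolding local_tilings_def leaftop_def by auto

lemma D0_subset_leaf: "D0 \<subseteq> Wu x"
  using openin_subset[OF tiling_facts(1)] by simp

lemma mem_uball_iff: "q \<in> uball Wu du c r \<longleftrightarrow> q \<in> Wu c \<and> du c q < r"
  unfolding uball_def Metric_space.mball_def[OF leaf_metric] using mem_leaf_self by auto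

lemma funpow_mem_leaf: "z \<in> Wu y \<Longrightarrow> (f ^^ n) z \<in> Wu ((f ^^ n) y)"
proof (induction n)
  case (Suc n)
  then show ?case using image_leaf[of "(f ^^ n) y"] by auto
qed simp

lemma funpow_expansion:
  assumes "z \<in> Wu y"
  shows "\<sigma>1 ^ n * du y z \<le> du ((f ^^ n) y) ((f ^^ n) z) \<and> du ((f ^^ n) y) ((f ^^ n) z) \<le> \<sigma>2 ^ n * du y z"
proof (induction n)
  case (Suc n)
  have z': "(f ^^ n) z \<in> Wu ((f ^^ n) y)" using funpow_mem_leaf assms by blast
  have "0 \<le> \<sigma>1" "0 \<le> \<sigma>2" using one_less_\<sigma>1 \<sigma>1_le_\<sigma>2 by auto
  then have "\<sigma>1 * (\<sigma>1 ^ n * du y z) \<le> \<sigma>1 * du ((f ^^ n) y) ((f ^^ n) z)"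
    "\<sigma>2 * du ((f ^^ n) y) ((f ^^ n) z) \<le> \<sigma>2 * (\<sigma>2 ^ n * du y z)"
    using Suc.IH by (auto intro: mult_left_mono)
  with leaf_expansion[OF z'] show ?case by auto
qed simp

lemma tile_shape:
  assumes "T \<in> tiles D0 k D n"
  obtains c where "c \<in> T" "T \<subseteq> Wu x"
    "\<And>q. q \<in> Wu x \<Longrightarrow> du ((f ^^ n) c) ((f ^^ n) q) < (1 - \<tau>) * \<delta> / 2 \<Longrightarrow> q \<in> T"
    "\<And>q. q \<in> T \<Longrightarrow> du ((f ^^ n) c) ((f ^^ n) q) < (1 + \<tau>) * \<delta>"
proof -
  obtain c where T: "T \<subseteq> Wu x" and c: "c \<in> Wu x"
    and inner: "uball Wu du ((f ^^ n) c) ((1 - \<tau>) * \<delta> / 2) \<subseteq> (f ^^ n) ` T"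
    and outer: "(f ^^ n) ` T \<subseteq> uball Wu du ((f ^^ n) c) ((1 + \<tau>) * \<delta>)"
  proof (cases "n = 0")
    case True
    with assms have "T = D0" by (simp add: tiles_def)
    with True tiling_facts(2) D0_subset_leaf that show ?thesis by auto
  next
    case False
    with assms obtain i where "i \<in> {1..k n}" "T = D n i" by (auto simp: tiles_def)
    with False tiling_facts(3)[of n i] openin_subset that show ?thesis by fastforce
  qed
  have fq: "(f ^^ n) q \<in> Wu ((f ^^ n) c)" if "q \<in> Wu x" for q
    using that leaf_eq[OF c] funpow_mem_leaf by blast
  have in_T: "q \<in> T" if "q \<in> Wu x" "du ((f ^^ n) c) ((f ^^ n) q) < (1 - \<tau>) * \<delta> / 2" for q
  proof -
    have "(f ^^ n) q \<in> (f ^^ n) ` T"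
      using inner fq[OF that(1)] that(2) mem_uball_iff by blast
    then show ?thesis
      using inj_fn[OF bij_is_inj[OF bij_f]] by (auto dest: injD)
  qed
  have "du ((f ^^ n) c) ((f ^^ n) c) = 0"
    using Metric_space.mdist_zero[OF leaf_metric mem_leaf_self] .
  with \<tau>_less_1 \<delta>_pos have "c \<in> T" by (intro in_T c) simp
  moreover have "du ((f ^^ n) c) ((f ^^ n) q) < (1 + \<tau>) * \<delta>" if "q \<in> T" for q
    using outer that mem_uball_iff by blast
  ultimately show ?thesis using that T in_T by blast
qed

lemma tile_subset_leaf: "T \<in> tiles D0 k D n \<Longrightarrow> T \<subseteq> Wu x"
  by (erule tile_shape) blast

lemma tile_nonempty: "T \<in> tiles D0 k D n \<Longrightarrow> T \<noteq> {}"
  by (erule tile_shape) blast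

lemma atom_tile:
  assumes T: "T \<in> tiles D0 k D n" and z: "z \<in> T"
  shows "atom D0 k D (z, n) = T" and "(z, n) \<in> Omega D0 k D"
proof -
  have unique: "A = T" if "A \<in> tiles D0 k D n" "z \<in> A" for A
  proof (cases "n = 0")
    case True
    with that T show ?thesis by (simp add: tiles_def)
  next
    case False
    with that T obtain i j where "i \<in> {1..k n}" "j \<in> {1..k n}" "A = D n i" "T = D n j"
      by (auto simp: tiles_def)
    moreover have "D n i \<inter> D n j \<noteq> {}"
      using z that(2) calculation by blast
    ultimately show ?thesis
      using False tiling_facts(4)[of n i j] by (cases "i = j") auto
  qed
  show "atom D0 k D (z, n) = T"
    unfolding atom_def fst_conv snd_conv by (rule the_equality) (use T z unique in blast)+
  from T z show "(z, n) \<in> Omega D0 k D"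
    unfolding Omega_def by blast
qed

lemma atom_in_tiles:
  assumes "\<omega> \<in> Omega D0 k D"
  shows "atom D0 k D \<omega> \<in> tiles D0 k D (snd \<omega>)" and "fst \<omega> \<in> atom D0 k D \<omega>"
proof -
  obtain z n where "\<omega> = (z, n)" "z \<in> \<Union>(tiles D0 k D n)"
    using assms unfolding Omega_def by auto
  then show "atom D0 k D \<omega> \<in> tiles D0 k D (snd \<omega>)" "fst \<omega> \<in> atom D0 k D \<omega>"
    using atom_tile(1) by auto
qed

lemma funpow_mem_base_leaf: "q \<in> Wu x \<Longrightarrow> (f ^^ n) q \<in> Wu ((f ^^ n) x)"
  by (rule funpow_mem_leaf)

lemma closure_of_tile_bound:
  assumes "T \<subseteq> Wu x" and c: "c \<in> Wu x"
    and T: "\<And>q. q \<in> T \<Longrightarrow> du ((f ^^ n) c) ((f ^^ n) q) < (1 + \<tau>) * \<delta>"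
    and p: "p \<in> W.mtopology closure_of T"
  shows "du ((f ^^ n) c) ((f ^^ n) p) \<le> (1 + \<tau>) * \<delta>"
proof (rule field_le_epsilon)
  fix e :: real assume "0 < e"
  interpret N: Metric_space "Wu ((f ^^ n) x)" du by (rule leaf_metric)
  have "0 < \<sigma>2 ^ n" using one_less_\<sigma>1 \<sigma>1_le_\<sigma>2 by simp
  with \<open>0 < e\<close> have "0 < e / \<sigma>2 ^ n" by simp
  with p obtain q where "p \<in> Wu x" "q \<in> T" "q \<in> W.mball p (e / \<sigma>2 ^ n)"
    unfolding W.metric_closure_of by blast
  then have q: "q \<in> T" "q \<in> Wu x" "du q p < e / \<sigma>2 ^ n"
    using W.commute by auto
  have "du ((f ^^ n) c) ((f ^^ n) p) \<le> du ((f ^^ n) c) ((f ^^ n) q) + du ((f ^^ n) q) ((f ^^ n) p)"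
    using N.triangle[OF funpow_mem_base_leaf funpow_mem_base_leaf funpow_mem_base_leaf] c q \<open>p \<in> Wu x\<close>
    by blast
  moreover have "du ((f ^^ n) q) ((f ^^ n) p) \<le> \<sigma>2 ^ n * du q p"
    using funpow_expansion[of p q n] \<open>p \<in> Wu x\<close> leaf_eq[OF q(2)] by simp
  moreover have "\<sigma>2 ^ n * du q p < e"
    using q(3) \<open>0 < \<sigma>2 ^ n\<close> by (simp add: pos_less_divide_eq mult.commute)
  ultimately show "du ((f ^^ n) c) ((f ^^ n) p) \<le> (1 + \<tau>) * \<delta> + e"
    using T[OF q(1)] by linarith
qed

lemma closure_of_tile_image_diameter:
  assumes T: "T \<in> tiles D0 k D n"
    and p: "p \<in> W.mtopology closure_of T" and p': "p' \<in> W.mtopology closure_of T"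
  shows "du ((f ^^ n) p) ((f ^^ n) p') \<le> 2 * (1 + \<tau>) * \<delta>"
proof -
  interpret N: Metric_space "Wu ((f ^^ n) x)" du by (rule leaf_metric)
  obtain c where c: "c \<in> T" "T \<subseteq> Wu x" "\<And>q. q \<in> T \<Longrightarrow> du ((f ^^ n) c) ((f ^^ n) q) < (1 + \<tau>) * \<delta>"
    using tile_shape[OF T] by metis
  have W: "c \<in> Wu x" "p \<in> Wu x" "p' \<in> Wu x"
    using c(1,2) p p' closure_of_subset_topspace[of W.mtopology T] by auto
  have "du ((f ^^ n) p) ((f ^^ n) p') \<le> du ((f ^^ n) c) ((f ^^ n) p) + du ((f ^^ n) c) ((f ^^ n) p')"
    using N.triangle''[OF funpow_mem_base_leaf funpow_mem_base_leaf funpow_mem_base_leaf] W by blast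
  also have "\<dots> \<le> 2 * (1 + \<tau>) * \<delta>"
    using closure_of_tile_bound[OF c(2) W(1) c(3) p] closure_of_tile_bound[OF c(2) W(1) c(3) p']
    by linarith
  finally show ?thesis .
qed

lemma closure_of_tile_diameter:
  assumes T: "T \<in> tiles D0 k D n"
    and p: "p \<in> W.mtopology closure_of T" and p': "p' \<in> W.mtopology closure_of T"
  shows "\<sigma>1 ^ n * du p p' \<le> 2 * (1 + \<tau>) * \<delta>"
proof -
  have "p \<in> Wu x" "p' \<in> Wu x"
    using p p' closure_of_subset_topspace[of W.mtopology T] by auto
  then have "\<sigma>1 ^ n * du p p' \<le> du ((f ^^ n) p) ((f ^^ n) p')"
    using funpow_expansion[of p' p n] leaf_eq[of p x] by simp
  with closure_of_tile_image_diameter[OF assms] show ?thesis by linarith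
qed

lemma tile_diameter_lt_expanded_inner_radius: "2 * (1 + \<tau>) * \<delta> < \<sigma>1 ^ a_star * ((1 - \<tau>) * \<delta> / 2)"
proof -
  have "\<sigma>1 powr (- real a_star) = 1 / \<sigma>1 ^ a_star"
    using one_less_\<sigma>1 by (simp add: powr_minus powr_realpow divide_inverse)
  with a_star_large one_less_\<sigma>1 show ?thesis
    by (simp add: field_simps)
qed

lemma subtile_exists:
  assumes T: "T \<in> tiles D0 k D n" "T \<subseteq> D0" and m: "a_star < m"
  obtains T' where "T' \<in> tiles D0 k D (n + m)" "T' \<subseteq> T"
proof -
  \<comment> \<open>Take a tile T' of level n + m whose closure contains the centre c of T.  After f^(n+m) it
    has diameter at most 2(1+\<tau>)\<delta>, so after f^n, which is smaller by at least \<sigma>1^m, it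
    lies in the inner ball of T around c.\<close>
  obtain c where c: "c \<in> T" "T \<subseteq> Wu x"
    and inner: "\<And>q. q \<in> Wu x \<Longrightarrow> du ((f ^^ n) c) ((f ^^ n) q) < (1 - \<tau>) * \<delta> / 2 \<Longrightarrow> q \<in> T"
    using tile_shape[OF T(1)] by metis
  have "1 \<le> n + m" using m by simp
  with c T(2) obtain i where i: "i \<in> {1..k (n + m)}" "c \<in> W.mtopology closure_of (D (n + m) i)"
    using tiling_facts(5) by blast
  with \<open>1 \<le> n + m\<close> have T': "D (n + m) i \<in> tiles D0 k D (n + m)"
    by (auto simp: tiles_def)
  have "q \<in> T" if q: "q \<in> D (n + m) i" for q
  proof -
    have "c \<in> W.mtopology closure_of D (n + m) i" "q \<in> W.mtopology closure_of D (n + m) i"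
      using i q tile_subset_leaf[OF T'] closure_of_subset[of "D (n + m) i" W.mtopology] by auto
    then have far: "du ((f ^^ (n + m)) c) ((f ^^ (n + m)) q) \<le> 2 * (1 + \<tau>) * \<delta>"
      by (rule closure_of_tile_image_diameter[OF T'])
    have "q \<in> Wu x" "c \<in> Wu x" using q c tile_subset_leaf[OF T'] by auto
    then have "(f ^^ n) q \<in> Wu ((f ^^ n) c)"
      using funpow_mem_leaf leaf_eq by blast
    then have "\<sigma>1 ^ m * du ((f ^^ n) c) ((f ^^ n) q) \<le> du ((f ^^ (n + m)) c) ((f ^^ (n + m)) q)"
      using funpow_expansion[of "(f ^^ n) q" "(f ^^ n) c" m] by (simp add: funpow_add add.commute[of n m])
    also have "\<dots> < \<sigma>1 ^ a_star * ((1 - \<tau>) * \<delta> / 2)"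
      using far tile_diameter_lt_expanded_inner_radius by linarith
    finally have "\<sigma>1 ^ m * du ((f ^^ n) c) ((f ^^ n) q) < \<sigma>1 ^ a_star * ((1 - \<tau>) * \<delta> / 2)" .
    moreover have "\<sigma>1 ^ a_star * du ((f ^^ n) c) ((f ^^ n) q) \<le> \<sigma>1 ^ m * du ((f ^^ n) c) ((f ^^ n) q)"
      using m one_less_\<sigma>1 by (intro mult_right_mono power_increasing) auto
    ultimately have "\<sigma>1 ^ a_star * du ((f ^^ n) c) ((f ^^ n) q) < \<sigma>1 ^ a_star * ((1 - \<tau>) * \<delta> / 2)"
      by linarith
    with one_less_\<sigma>1 have "du ((f ^^ n) c) ((f ^^ n) q) < (1 - \<tau>) * \<delta> / 2"
      by (simp add: mult_less_cancel_left_pos)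
    with inner \<open>q \<in> Wu x\<close> show "q \<in> T" by blast
  qed
  with T' that show ?thesis by blast
qed

lemma refinement_exists:
  assumes "\<omega> \<in> Omega D0 k D" "atom D0 k D \<omega> \<subseteq> D0" "a_star < m"
  shows "\<exists>\<omega>'. \<omega>' \<in> Omega D0 k D \<and> snd \<omega>' = snd \<omega> + m \<and> pos_le D0 k D \<omega>' \<omega>"
proof -
  obtain T' where T': "T' \<in> tiles D0 k D (snd \<omega> + m)" "T' \<subseteq> atom D0 k D \<omega>"
    using subtile_exists[OF atom_in_tiles(1)[OF assms(1)] assms(2,3)] by blast
  then obtain z' where "z' \<in> T'"
    using tile_nonempty by blast
  with T' atom_tile[OF T'(1)] show ?thesis
    unfolding pos_le_def by (intro exI[of _ "(z', snd \<omega> + m)"]) auto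
qed

lemma closure_of_tile_small:
  assumes "T \<in> tiles D0 k D n" and "2 * (1 + \<tau>) * \<delta> < e * \<sigma>1 ^ n"
    and "p \<in> W.mtopology closure_of T" "q \<in> W.mtopology closure_of T"
  shows "du p q < e"
proof -
  have "\<sigma>1 ^ n * du p q < \<sigma>1 ^ n * e"
    using closure_of_tile_diameter[OF assms(1,3,4)] assms(2) by (simp add: mult.commute)
  with one_less_\<sigma>1 show ?thesis
    by (simp add: mult_less_cancel_left_pos)
qed

lemma exists_level_above:
  assumes "0 < e"
  obtains n where "2 * (1 + \<tau>) * \<delta> < e * \<sigma>1 ^ n"
proof -
  obtain n where "2 * (1 + \<tau>) * \<delta> / e < \<sigma>1 ^ n"
    using real_arch_pow[OF one_less_\<sigma>1] by blast
  with assms that show ?thesis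
    by (simp add: pos_divide_less_eq mult.commute)
qed

lemma outcome_mem_closure_of_atom:
  assumes Omega: "\<And>j. alice j \<in> Omega D0 k D"
    and nested: "\<And>j j'. j \<le> j' \<Longrightarrow> pos_le D0 k D (alice j') (alice j)"
    and levels: "\<And>j. j \<le> snd (alice j)"
  shows "outcome Wu du x D0 k D alice \<in> W.mtopology closure_of atom D0 k D (alice j)"
proof -
  define C where "C j = W.mtopology closure_of atom D0 k D (alice j)" for j
  have tile: "atom D0 k D (alice j) \<in> tiles D0 k D (snd (alice j))" for j
    using atom_in_tiles(1)[OF Omega] .
  have "atom D0 k D (alice j) \<subseteq> C j" for j
    unfolding C_def using tile_subset_leaf[OF tile] by (simp add: closure_of_subset)
  then have centre: "fst (alice j) \<in> C j" for j
    using atom_in_tiles(2)[OF Omega] by blast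
  have "\<exists>l. l \<in> Wu x \<and> \<Inter> (range C) = {l}"
  proof (rule leaf_complete[of x, unfolded W.mcomplete_nest_sing, rule_format], intro conjI allI impI)
    show "closedin W.mtopology (C j)" for j
      unfolding C_def by simp
    show "C j \<noteq> {}" for j
      using centre[of j] by blast
    show "decseq C"
      unfolding decseq_def C_def
    proof (intro allI impI)
      fix j j' :: nat assume "j \<le> j'"
      with nested have "atom D0 k D (alice j') \<subseteq> atom D0 k D (alice j)"
        unfolding pos_le_def by blast
      then show "W.mtopology closure_of atom D0 k D (alice j') \<subseteq> W.mtopology closure_of atom D0 k D (alice j)"
        by (rule closure_of_mono)
    qed
    fix e :: real assume "0 < e"
    then obtain j where j: "2 * (1 + \<tau>) * \<delta> < e * \<sigma>1 ^ j"
      by (rule exists_level_above)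
    have "\<sigma>1 ^ j \<le> \<sigma>1 ^ snd (alice j)"
      using levels one_less_\<sigma>1 by (intro power_increasing) auto
    with \<open>0 < e\<close> j have "2 * (1 + \<tau>) * \<delta> < e * \<sigma>1 ^ snd (alice j)"
      by (smt (verit) mult_left_mono)
    have "C j \<subseteq> W.mcball (fst (alice j)) e"
    proof
      fix q assume "q \<in> C j"
      then have "q \<in> Wu x" "fst (alice j) \<in> Wu x"
        using centre[of j] closure_of_subset_topspace unfolding C_def by fastforce+
      moreover have "du (fst (alice j)) q < e"
        using closure_of_tile_small[OF tile \<open>2 * (1 + \<tau>) * \<delta> < e * \<sigma>1 ^ snd (alice j)\<close>]
          centre[of j] \<open>q \<in> C j\<close> unfolding C_def by blast
      ultimately show "q \<in> W.mcball (fst (alice j)) e" by simp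
    qed
    then show "\<exists>n a. C n \<subseteq> W.mcball a e" by blast
  qed
  then obtain l where l: "l \<in> Wu x" "\<Inter> (range C) = {l}" by blast
  have "outcome Wu du x D0 k D alice = l"
    unfolding outcome_def leaftop_def
  proof (rule the_equality)
    show "l \<in> Wu x \<and> (\<forall>j. l \<in> W.mtopology closure_of atom D0 k D (alice j))"
      using l unfolding C_def by blast
    show "z = l" if "z \<in> Wu x \<and> (\<forall>j. z \<in> W.mtopology closure_of atom D0 k D (alice j))" for z
      using that l unfolding C_def by blast
  qed
  with l show ?thesis
    unfolding C_def by blast
qed

lemma small_tile_near:
  assumes "y \<in> D0" and "0 < r"
  obtains n T where "T \<in> tiles D0 k D n" "W.mtopology closure_of T \<subseteq> W.mball y r \<inter> D0"
proof -
  obtain \<epsilon> where "0 < \<epsilon>" "W.mball y \<epsilon> \<subseteq> D0"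
    using tiling_facts(1) assms(1) unfolding W.openin_mtopology by blast
  define \<rho> where "\<rho> = min \<epsilon> r"
  have "0 < \<rho>" "W.mball y \<rho> \<subseteq> W.mball y r \<inter> D0"
    using \<open>0 < \<epsilon>\<close> \<open>0 < r\<close> \<open>W.mball y \<epsilon> \<subseteq> D0\<close> unfolding \<rho>_def by auto
  obtain n0 where n0: "2 * (1 + \<tau>) * \<delta> < \<rho> * \<sigma>1 ^ n0"
    using exists_level_above[OF \<open>0 < \<rho>\<close>] by blast
  define n where "n = Suc n0"
  have "\<sigma>1 ^ n0 \<le> \<sigma>1 ^ n"
    unfolding n_def using one_less_\<sigma>1 by (intro power_increasing) auto
  with n0 \<open>0 < \<rho>\<close> have small: "2 * (1 + \<tau>) * \<delta> < \<rho> * \<sigma>1 ^ n"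
    by (smt (verit) mult_left_mono)
  obtain i where i: "i \<in> {1..k n}" "y \<in> W.mtopology closure_of (D n i)"
    using tiling_facts(5)[of n] assms(1) unfolding n_def by auto
  then have T: "D n i \<in> tiles D0 k D n"
    unfolding n_def by (auto simp: tiles_def)
  have "W.mtopology closure_of D n i \<subseteq> W.mball y \<rho>"
  proof
    fix q assume q: "q \<in> W.mtopology closure_of D n i"
    then have "q \<in> Wu x" "y \<in> Wu x"
      using i(2) closure_of_subset_topspace by fastforce+
    with closure_of_tile_small[OF T small i(2) q] show "q \<in> W.mball y \<rho>" by simp
  qed
  with T \<open>W.mball y \<rho> \<subseteq> W.mball y r \<inter> D0\<close> that show ?thesis by blast
qed

section \<open>Winning sets are dense\<close>

lemma winning_set_meets_closure_of_tile:
  assumes "a_star < b" and \<sigma>: "winning_strategy Wu du x D0 k D a b S \<sigma>"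
    and T: "T \<in> tiles D0 k D n" "T \<subseteq> D0"
  shows "S \<inter> W.mtopology closure_of T \<noteq> {}"
proof -
  obtain refine where refine: "\<And>\<omega>. \<omega> \<in> Omega D0 k D \<Longrightarrow> atom D0 k D \<omega> \<subseteq> D0 \<Longrightarrow>
      refine \<omega> \<in> Omega D0 k D \<and> snd (refine \<omega>) = snd \<omega> + b \<and> pos_le D0 k D (refine \<omega>) \<omega>"
    using refinement_exists[OF _ _ assms(1)] by metis
  obtain z where "z \<in> T" using tile_nonempty[OF T(1)] by blast
  obtain bob where bob: "bob 0 = (z, n)" "\<And>j. bob (Suc j) = refine (play \<sigma> bob j)"
    using responding_bob_exists by metis
  define alice where "alice = play \<sigma> bob"
  have legal: "bob_ok D0 k D b bob alice j \<and> alice_ok D0 k D a bob alice j" for j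
  proof (rule legal_play_against_refining_bob[where refine = refine])
    show "alice_ok D0 k D a bob alice j"
      if "\<forall>i\<le>j. bob_ok D0 k D b bob alice i" "\<forall>i<j. alice_ok D0 k D a bob alice i" for j
      using \<sigma> that unfolding winning_strategy_def alice_def by blast
    show "bob 0 \<in> Omega D0 k D" "atom D0 k D (bob 0) \<subseteq> D0"
      using atom_tile[OF T(1) \<open>z \<in> T\<close>] bob(1) T(2) by auto
  qed (use refine bob(2) alice_def in auto)
  then have "outcome Wu du x D0 k D alice \<in> S"
    using \<sigma> unfolding winning_strategy_def alice_def by blast
  moreover have "outcome Wu du x D0 k D alice \<in> W.mtopology closure_of atom D0 k D (alice 0)"
  proof (rule outcome_mem_closure_of_atom)
    show "alice j \<in> Omega D0 k D" for j
      using legal unfolding alice_ok_def by blast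
    show "pos_le D0 k D (alice j') (alice j)" if "j \<le> j'" for j j'
      using legal_play_nested[OF _ that] legal by blast
    show "j \<le> snd (alice j)" for j
      by (rule legal_play_level_ge[of b]) (use legal assms(1) in auto)
  qed
  moreover have "atom D0 k D (alice 0) \<subseteq> T"
    using legal[of 0] atom_tile[OF T(1) \<open>z \<in> T\<close>] bob(1) unfolding alice_ok_def pos_le_def by simp
  then have "W.mtopology closure_of atom D0 k D (alice 0) \<subseteq> W.mtopology closure_of T"
    by (rule closure_of_mono)
  ultimately show ?thesis by blast
qed

lemma ab_winning_dense:
  assumes "a_star < b" and "ab_winning Wu du x D0 k D a b S"
  shows "D0 \<subseteq> W.mtopology closure_of (S \<inter> D0)"
proof
  fix y assume "y \<in> D0"
  obtain \<sigma> where \<sigma>: "winning_strategy Wu du x D0 k D a b S \<sigma>"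
    using assms(2) unfolding ab_winning_iff_winning_strategy by blast
  have "\<exists>s\<in>S \<inter> D0. s \<in> W.mball y r" if "0 < r" for r
  proof -
    obtain n T where T: "T \<in> tiles D0 k D n" and small: "W.mtopology closure_of T \<subseteq> W.mball y r \<inter> D0"
      using small_tile_near[OF \<open>y \<in> D0\<close> \<open>0 < r\<close>] by blast
    moreover have "T \<subseteq> W.mtopology closure_of T"
      using tile_subset_leaf[OF T] by (simp add: closure_of_subset)
    ultimately have "S \<inter> W.mtopology closure_of T \<noteq> {}"
      by (intro winning_set_meets_closure_of_tile[OF assms(1) \<sigma>]) auto
    with small show ?thesis by blast
  qed
  with \<open>y \<in> D0\<close> D0_subset_leaf show "y \<in> W.mtopology closure_of (S \<inter> D0)"
    unfolding W.metric_closure_of by blast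
qed

end

theorem proposition2p8:
  fixes f :: "'a \<Rightarrow> 'a" and Wu :: "'a \<Rightarrow> 'a set" and du :: "'a \<Rightarrow> 'a \<Rightarrow> real"
    and \<sigma>1 \<sigma>2 \<delta> \<tau> :: real and x :: 'a and D0 :: "'a set"
    and k :: "nat \<Rightarrow> nat" and D :: "nat \<Rightarrow> nat \<Rightarrow> 'a set" and a_star :: nat
  assumes "unstable_leaf_system f Wu du \<sigma>1 \<sigma>2"
    and "local_tilings f Wu du x D0 \<delta> \<tau> k D"
    and "0 < a_star"
    and "(1 + \<tau>) * \<delta> * \<sigma>1 powr (- real a_star) < (1 - \<tau>) * \<delta> / 4"
  shows "(\<forall>a b S. a_star < a \<and> a_star < b \<and> ab_winning Wu du x D0 k D a b S
            \<longrightarrow> D0 \<subseteq> leaftop Wu du x closure_of (S \<inter> D0))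
       \<and> (\<forall>a Ss. a_star < a \<and> (\<forall>i::nat. a_winning Wu du x D0 k D a_star a (Ss i))
            \<longrightarrow> a_winning Wu du x D0 k D a_star a (\<Inter>i. Ss i))"
proof -
  interpret tiled_leaf f Wu du \<sigma>1 \<sigma>2 \<delta> \<tau> x D0 k D a_star
    using assms(1,2,4) by unfold_locales
  have "D0 \<subseteq> leaftop Wu du x closure_of (S \<inter> D0)"
    if "a_star < b" "ab_winning Wu du x D0 k D a b S" for a b S
    using ab_winning_dense[OF that] unfolding leaftop_def .
  moreover have "a_winning Wu du x D0 k D a_star a (\<Inter>i. Ss i)"
    if "\<forall>i::nat. a_winning Wu du x D0 k D a_star a (Ss i)" for a Ss
    using that by (simp add: a_winning_Inter)
  ultimately show ?thesis by blast
qed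

end
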